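(* Let $n\in\mathbb{N}$ and let $a=(\alpha_1,\dots,\alpha_n)$, $b=(\beta_1,\dots,\beta_n)\in\mathbb{R}^n$. Let $\mathcal{V}_a$ and $\mathcal{V}_b$ denote the convex hulls of the sets of all coordinate permutations of $a$ and of $b$, respectively, i.e. $\mathcal{V}_a=\mathrm{conv}\{(\alpha_{\pi(1)},\dots,\alpha_{\pi(n)}):\pi\in S_n\}$ and similarly for $b$. Then $\mathcal{V}_a\cap\mathcal{V}_b=\emptyset$ if and only if $\sum_{k=1}^n\alpha_k\neq\sum_{k=1}^n\beta_k$.
   Context: $S_n$ denotes the symmetric group on $\{1,\dots,n\}$. *)

theory Defs
  imports "HOL-Analysis.Analysis"
begin

end

theory Submission
  imports Defs
begin

text \<open>Every coordinate permutation of \<open>a\<close> has the same coordinate sum, so the convex hull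
  \<open>\<V>\<^sub>a\<close> lies in the hyperplane \<open>\<Sum>x\<^sub>k = \<Sum>\<alpha>\<^sub>k\<close>; this gives one direction. Conversely, averaging
  over all permutations produces a point of \<open>\<V>\<^sub>a\<close> that is invariant under permutations, i.e.
  the constant vector with entries \<open>(\<Sum>\<alpha>\<^sub>k)/n\<close>; if the sums agree, this point is shared by
  \<open>\<V>\<^sub>a\<close> and \<open>\<V>\<^sub>b\<close>.\<close>

definition permutation_orbit :: "real ^ 'n \<Rightarrow> (real ^ 'n) set" where
  "permutation_orbit a = {(\<chi> i. a $ \<pi> i) | \<pi>. \<pi> permutes (UNIV :: 'n set)}"

lemma convex_coordinate_sum_level: "convex {x :: real ^ 'n. (\<Sum>k\<in>UNIV. x $ k) = c}"
  unfolding convex_def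
  by (simp add: sum.distrib flip: sum_distrib_left distrib_right)

lemma sum_permuted_coordinates:
  fixes a :: "real ^ 'n"
  assumes "\<pi> permutes (UNIV :: 'n set)"
  shows "(\<Sum>k\<in>UNIV. (\<chi> i. a $ \<pi> i) $ k) = (\<Sum>k\<in>UNIV. a $ k)"
  using sum.permute[OF assms, of "\<lambda>k. a $ k"] by (simp add: comp_def)

lemma coordinate_sum_in_permutation_hull:
  fixes a :: "real ^ 'n"
  assumes "x \<in> convex hull permutation_orbit a"
  shows "(\<Sum>k\<in>UNIV. x $ k) = (\<Sum>k\<in>UNIV. a $ k)"
proof -
  have "permutation_orbit a \<subseteq> {y. (\<Sum>k\<in>UNIV. y $ k) = (\<Sum>k\<in>UNIV. a $ k)}"
    unfolding permutation_orbit_def using sum_permuted_coordinates by blast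
  then have "convex hull permutation_orbit a \<subseteq> {y. (\<Sum>k\<in>UNIV. y $ k) = (\<Sum>k\<in>UNIV. a $ k)}"
    by (intro hull_minimal convex_coordinate_sum_level)
  with assms show ?thesis by blast
qed

lemma constant_vector_in_permutation_hull:
  fixes a :: "real ^ 'n"
  shows "(\<chi> i. (\<Sum>k\<in>UNIV. a $ k) / real CARD('n)) \<in> convex hull permutation_orbit a"
proof -
  define P where "P = {\<pi>. \<pi> permutes (UNIV :: 'n set)}"
  define c where "c = (\<Sum>\<pi>\<in>P. (1 / real (card P)) *\<^sub>R (\<chi> i. a $ \<pi> i))"
  have "finite P" unfolding P_def by (simp add: finite_permutations)
  moreover have "id \<in> P" unfolding P_def by simp
  ultimately have "card P > 0" by (auto simp: card_gt_0_iff)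
  have c_hull: "c \<in> convex hull permutation_orbit a"
    unfolding c_def
  proof (rule convex_sum[OF \<open>finite P\<close> convex_convex_hull])
    show "(\<Sum>\<pi>\<in>P. 1 / real (card P)) = 1" using \<open>card P > 0\<close> by auto
    show "\<And>\<pi>. \<pi> \<in> P \<Longrightarrow> (\<chi> i. a $ \<pi> i) \<in> convex hull permutation_orbit a"
      unfolding P_def permutation_orbit_def by (rule hull_inc) blast
  qed simp
  \<comment> \<open>composing with the transposition of \<open>i\<close> and \<open>j\<close> permutes the summation index\<close>
  have c_const: "c $ i = c $ j" for i j
  proof -
    have "Transposition.transpose i j permutes (UNIV :: 'n set)" by (rule permutes_swap_id) auto
    then have "(\<Sum>\<pi>\<in>P. a $ \<pi> i) = (\<Sum>\<pi>\<in>P. a $ (\<pi> \<circ> Transposition.transpose i j) i)"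
      unfolding P_def by (rule sum_permutations_compose_right)
    then show ?thesis by (simp add: c_def sum_component flip: sum_divide_distrib)
  qed
  have "(\<Sum>k\<in>UNIV. a $ k) = (\<Sum>k\<in>(UNIV :: 'n set). c $ i)" for i
    using coordinate_sum_in_permutation_hull[OF c_hull] c_const by (metis (no_types) sum.cong)
  then have "c = (\<chi> i. (\<Sum>k\<in>UNIV. a $ k) / real CARD('n))"
    by (simp add: vec_eq_iff field_simps)
  with c_hull show ?thesis by simp
qed

theorem proposition1:
  fixes a b :: "real ^ 'n"
  shows "(convex hull {(\<chi> i. a $ \<pi> i) | \<pi>. \<pi> permutes (UNIV :: 'n set)})
           \<inter> (convex hull {(\<chi> i. b $ \<pi> i) | \<pi>. \<pi> permutes (UNIV :: 'n set)}) = {}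
         \<longleftrightarrow> (\<Sum>k\<in>UNIV. a $ k) \<noteq> (\<Sum>k\<in>UNIV. b $ k)"
  unfolding permutation_orbit_def[symmetric]
proof
  assume "convex hull permutation_orbit a \<inter> convex hull permutation_orbit b = {}"
  then show "(\<Sum>k\<in>UNIV. a $ k) \<noteq> (\<Sum>k\<in>UNIV. b $ k)"
    using constant_vector_in_permutation_hull[of a] constant_vector_in_permutation_hull[of b]
    by auto
next
  assume "(\<Sum>k\<in>UNIV. a $ k) \<noteq> (\<Sum>k\<in>UNIV. b $ k)"
  then show "convex hull permutation_orbit a \<inter> convex hull permutation_orbit b = {}"
    using coordinate_sum_in_permutation_hull[of _ a] coordinate_sum_in_permutation_hull[of _ b]
    by fastforce
qed

end
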